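(* Let $K$ be a field, $s\ge 2$, and $S=K[t_1,\ldots,t_s]$ with each $t_i$ of degree $1$. Let $\mathcal{L}\subset\mathbb{Z}^s$ be a lattice such that the lattice ideal $I(\mathcal{L})$ is graded (i.e. generated by homogeneous polynomials) and $\dim S/I(\mathcal{L})=1$. Then $$\deg\, S/I(\mathcal{L})=|T(\mathbb{Z}^s/\mathcal{L})|,$$ where $T(\mathbb{Z}^s/\mathcal{L})$ is the torsion subgroup of $\mathbb{Z}^s/\mathcal{L}$.
   Context: A lattice is a subgroup $\mathcal{L}$ of $\mathbb{Z}^s$. For $a\in\mathbb{Z}^s$ write $a=a^+-a^-$ with $a^+,a^-\in\mathbb{N}^s$ of disjoint supports, and $t^c=t_1^{c_1}\cdots t_s^{c_s}$ for $c\in\mathbb{N}^s$. The lattice ideal of $\mathcal{L}$ is $I(\mathcal{L})=(\{t^{a^+}-t^{a^-}: a\in\mathcal{L}\})\subset S$. The torsion subgroup $T(M)$ of an abelian group $M$ is the set of $x\in M$ with $px=0$ for some positive integer $p$. For a graded ideal $I\subset S$, with $S_d$ the homogeneous polynomials of degree $d$ (with $0$) and $I_d=I\cap S_d$, the Hilbert function is $H_I(d)=\dim_K S_d/I_d$; there is a unique polynomial $h_I(t)=c_kt^k+\cdots$ (the Hilbert polynomial, of degree $k$, with $k=-1$ meaning $h_I=0$) with $h_I(d)=H_I(d)$ for $d\gg0$; $\dim S/I=k+1$ (Krull dimension). The degree $\deg S/I$ is $c_k\,k!$ if $k\ge 0$ and $\dim_K(S/I)$ if $k=-1$. *)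

theory Defs
  imports Complex_Main "HOL-Library.Poly_Mapping" "HOL-Computational_Algebra.Polynomial"
begin

text \<open>Polynomial ring S = K[t_i : i in 'n] (the variables are indexed by a finite type 'n,
  so s = CARD('n)); a monomial t^c is an exponent vector c :: 'n =>0 nat.\<close>
type_synonym ('n, 'k) mpoly = "('n \<Rightarrow>\<^sub>0 nat) \<Rightarrow>\<^sub>0 'k"

definition mdeg :: "('n::finite \<Rightarrow>\<^sub>0 nat) \<Rightarrow> nat" where
  "mdeg c = (\<Sum>i\<in>UNIV. Poly_Mapping.lookup c i)"

definition tmon :: "('n::finite \<Rightarrow>\<^sub>0 nat) \<Rightarrow> ('n, 'k::field) mpoly" where
  "tmon c = Poly_Mapping.single c 1"

definition homog_part :: "nat \<Rightarrow> ('n::finite, 'k::field) mpoly set" where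
  "homog_part d = {p. \<forall>m\<in>Poly_Mapping.keys p. mdeg m = d}"

definition ideal_gen :: "('n::finite, 'k::field) mpoly set \<Rightarrow> ('n, 'k) mpoly set" where
  "ideal_gen G = \<Inter>{J. G \<subseteq> J \<and> 0 \<in> J \<and> (\<forall>a\<in>J. \<forall>b\<in>J. a + b \<in> J) \<and> (\<forall>a\<in>J. \<forall>r. r * a \<in> J)}"

definition graded_ideal :: "('n::finite, 'k::field) mpoly set \<Rightarrow> bool" where
  "graded_ideal I \<longleftrightarrow> (\<exists>G. (\<forall>g\<in>G. \<exists>d. g \<in> homog_part d) \<and> I = ideal_gen G)"

definition kscale :: "'k::field \<Rightarrow> ('n, 'k) mpoly \<Rightarrow> ('n, 'k) mpoly" where
  "kscale c p = Poly_Mapping.map (\<lambda>x. c * x) p"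

definition kdim :: "('n::finite, 'k::field) mpoly set \<Rightarrow> nat" where
  "kdim V = vector_space.dim kscale V"

definition hilbert_fun :: "('n::finite, 'k::field) mpoly set \<Rightarrow> nat \<Rightarrow> nat" where
  "hilbert_fun I d = kdim (homog_part d :: ('n, 'k) mpoly set) - kdim (I \<inter> homog_part d)"

definition hilbert_poly :: "('n::finite, 'k::field) mpoly set \<Rightarrow> real poly" where
  "hilbert_poly I = (THE p. \<forall>\<^sub>F d in sequentially. poly p (real d) = real (hilbert_fun I d))"

text \<open>Krull dimension of S/I = k+1 where k = deg h_I (k = -1 iff h_I = 0).\<close>
definition krull_dim_quot :: "('n::finite, 'k::field) mpoly set \<Rightarrow> nat" where
  "krull_dim_quot I = (if hilbert_poly I = 0 then 0 else degree (hilbert_poly I) + 1)"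

definition degree_quot :: "('n::finite, 'k::field) mpoly set \<Rightarrow> real" where
  "degree_quot I = (if hilbert_poly I = 0 then real (\<Sum>d | hilbert_fun I d \<noteq> 0. hilbert_fun I d)
     else lead_coeff (hilbert_poly I) * fact (degree (hilbert_poly I)))"

definition is_lattice :: "('n::finite \<Rightarrow> int) set \<Rightarrow> bool" where
  "is_lattice L \<longleftrightarrow> (\<lambda>_. 0) \<in> L \<and> (\<forall>a\<in>L. \<forall>b\<in>L. (\<lambda>i. a i + b i) \<in> L) \<and> (\<forall>a\<in>L. (\<lambda>i. - a i) \<in> L)"

definition pos_part :: "('n::finite \<Rightarrow> int) \<Rightarrow> ('n \<Rightarrow>\<^sub>0 nat)" where
  "pos_part a = Abs_poly_mapping (\<lambda>i. nat (a i))"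

definition neg_part :: "('n::finite \<Rightarrow> int) \<Rightarrow> ('n \<Rightarrow>\<^sub>0 nat)" where
  "neg_part a = Abs_poly_mapping (\<lambda>i. nat (- a i))"

definition lattice_ideal :: "('n::finite \<Rightarrow> int) set \<Rightarrow> ('n, 'k::field) mpoly set" where
  "lattice_ideal L = ideal_gen {tmon (pos_part a) - tmon (neg_part a) | a. a \<in> L}"

definition torsion_quot :: "('n::finite \<Rightarrow> int) set \<Rightarrow> ('n \<Rightarrow> int) set set" where
  "torsion_quot L = (\<lambda>x. {y. (\<lambda>i. y i - x i) \<in> L}) ` {x. \<exists>p::int. p > 0 \<and> (\<lambda>i. p * x i) \<in> L}"

end

theory Submission
  imports Defs "HOL-Library.Function_Algebras" "HOL-Library.Countable"
begin

text \<open>Two monomials \<open>t\<^sup>m, t\<^sup>m'\<close> are congruent modulo \<open>I(L)\<close> exactly when \<open>m - m' \<in> L\<close>, and \<open>I(L)\<close> is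
  spanned by the binomials \<open>t\<^sup>m - t\<^sup>m'\<close> of such pairs, because every polynomial of \<open>I(L)\<close>
  has vanishing coefficient sums on the classes of \<open>\<int>\<^sup>s/L\<close>. Hence the Hilbert function \<open>h(d)\<close>
  counts the classes of \<open>\<int>\<^sup>s/L\<close> containing a monomial of degree \<open>d\<close>. Gradedness forces \<open>L\<close>
  into the hyperplane \<open>H\<close> of zero-sum vectors, so after a shift these are classes of \<open>H/L\<close>,
  and for large \<open>d\<close> any given finite set of classes of \<open>H/L\<close> is reached. If \<open>H/L\<close> were
  infinite, \<open>h(d)\<close> would be unbounded, contradicting \<open>dim S/I = 1\<close>; so \<open>h(d)\<close> is eventually
  \<open>|H/L|\<close>, and the finite group \<open>H/L\<close> is the torsion subgroup of \<open>\<int>\<^sup>s/L\<close>.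
  The Hilbert polynomial exists at all because the monomials that are not lexicographically
  least in their class form a monomial ideal, whose degree-\<open>d\<close> part is counted by Dickson's
  lemma and inclusion-exclusion.\<close>

abbreviation lookup where "lookup \<equiv> Poly_Mapping.lookup"
abbreviation keys where "keys \<equiv> Poly_Mapping.keys"
abbreviation single where "single \<equiv> Poly_Mapping.single"

definition int_exps :: "('n \<Rightarrow>\<^sub>0 nat) \<Rightarrow> 'n \<Rightarrow> int" where
  "int_exps m = (\<lambda>i. int (lookup m i))"

definition deg_monoms :: "nat \<Rightarrow> ('n::finite \<Rightarrow>\<^sub>0 nat) set" where
  "deg_monoms d = {m. mdeg m = d}"

lemma int_exps_add: "int_exps (a + b) = int_exps a + int_exps b"
  by (simp add: int_exps_def lookup_add fun_eq_iff)

lemma mdeg_add: "mdeg (a + b) = mdeg a + mdeg b"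
  by (simp add: mdeg_def lookup_add sum.distrib)

lemma int_mdeg: "int (mdeg m) = sum (int_exps m) UNIV"
  by (simp add: mdeg_def int_exps_def)

lemma deg_monomsE:
  fixes y :: "'n::finite \<Rightarrow> int"
  assumes "\<And>i. 0 \<le> y i" and "sum y UNIV = int d"
  obtains m where "m \<in> deg_monoms d" and "int_exps m = y"
proof
  let ?m = "Abs_poly_mapping (\<lambda>i. nat (y i)) :: 'n \<Rightarrow>\<^sub>0 nat"
  show ex: "int_exps ?m = y"
    using assms(1) by (simp add: int_exps_def fun_eq_iff)
  have "int (mdeg ?m) = int d"
    by (simp only: int_mdeg ex assms(2))
  then show "?m \<in> deg_monoms d"
    by (simp add: deg_monoms_def)
qed

lemma finite_deg_monoms: "finite (deg_monoms d :: ('n::finite \<Rightarrow>\<^sub>0 nat) set)"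
proof -
  have "lookup ` (deg_monoms d :: ('n \<Rightarrow>\<^sub>0 nat) set) \<subseteq> {f. \<forall>x. (x \<in> UNIV \<longrightarrow> f x \<in> {..d}) \<and> (x \<notin> UNIV \<longrightarrow> f x = 0)}"
  proof clarsimp
    fix m :: "'n \<Rightarrow>\<^sub>0 nat" and i
    assume "m \<in> deg_monoms d"
    then show "lookup m i \<le> d"
      using member_le_sum[of i UNIV "lookup m"] by (simp add: deg_monoms_def mdeg_def)
  qed
  then have "finite (lookup ` (deg_monoms d :: ('n \<Rightarrow>\<^sub>0 nat) set))"
    by (rule finite_subset) (rule finite_set_of_finite_funs; simp)
  then show ?thesis
    by (rule finite_imageD) (simp add: inj_on_def)
qed

lemma bij_betw_deg_monoms_exponent_lists:
  fixes g :: "nat \<Rightarrow> 'n::finite"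
  defines "s \<equiv> card (UNIV :: 'n set)"
  assumes g: "bij_betw g {0..<s} UNIV"
  shows "bij_betw (\<lambda>m. map (\<lambda>k. lookup m (g k)) [0..<s]) (deg_monoms d)
           {l. length l = s \<and> sum_list l = d}"
proof -
  define F where "F m = map (\<lambda>k. lookup m (g k)) [0..<s]" for m :: "'n \<Rightarrow>\<^sub>0 nat"
  have sum_F: "sum_list (F m) = mdeg m" for m
  proof -
    have "sum_list (F m) = (\<Sum>k\<in>{0..<s}. lookup m (g k))"
      by (simp add: F_def sum_set_upt_conv_sum_list_nat[symmetric])
    also have "\<dots> = mdeg m"
      using sum.reindex_bij_betw[OF g, of "lookup m"] by (simp add: mdeg_def)
    finally show ?thesis .
  qed
  have F_nth: "F m ! k = lookup m (g k)" if "k < s" for m k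
    using that by (simp add: F_def)
  have "inj_on F (deg_monoms d)"
  proof (rule inj_onI)
    fix m m' assume "F m = F m'"
    then have "lookup m (g k) = lookup m' (g k)" if "k < s" for k
      using that by (metis F_nth)
    moreover have "\<forall>i. \<exists>k<s. i = g k"
      using g by (force simp: bij_betw_def image_iff)
    ultimately show "m = m'"
      by (metis poly_mapping_eqI)
  qed
  moreover have "{l. length l = s \<and> sum_list l = d} \<subseteq> F ` deg_monoms d"
  proof
    fix l :: "nat list" assume "l \<in> {l. length l = s \<and> sum_list l = d}"
    then have l: "length l = s" "sum_list l = d"
      by auto
    define m :: "'n \<Rightarrow>\<^sub>0 nat" where "m = Abs_poly_mapping (\<lambda>i. l ! (the_inv_into {0..<s} g i))"
    have lookup_m: "lookup m i = l ! (the_inv_into {0..<s} g i)" for i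
      unfolding m_def by (subst lookup_Abs_poly_mapping) auto
    have "lookup m (g k) = l ! k" if "k < s" for k
      using that g by (simp add: lookup_m the_inv_into_f_f bij_betw_def)
    then have "F m = l"
      using l by (auto simp: F_def intro: nth_equalityI)
    moreover have "m \<in> deg_monoms d"
      using sum_F[of m] l \<open>F m = l\<close> by (simp add: deg_monoms_def)
    ultimately show "l \<in> F ` deg_monoms d"
      by blast
  qed
  moreover have "F ` deg_monoms d \<subseteq> {l. length l = s \<and> sum_list l = d}"
    using sum_F by (auto simp: F_def deg_monoms_def)
  ultimately show ?thesis
    unfolding F_def[symmetric] by (auto simp: bij_betw_def)
qed

lemma card_deg_monoms:
  "card (deg_monoms d :: ('n::finite \<Rightarrow>\<^sub>0 nat) set) = (d + card (UNIV :: 'n set) - 1) choose d"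
proof -
  obtain g :: "nat \<Rightarrow> 'n" where "bij_betw g {0..<card (UNIV :: 'n set)} UNIV"
    using ex_bij_betw_nat_finite[of "UNIV :: 'n set"] by auto
  from bij_betw_same_card[OF bij_betw_deg_monoms_exponent_lists[OF this]]
  show ?thesis
    by (simp add: card_length_sum_list)
qed

definition binomial_poly :: "nat \<Rightarrow> real poly" where
  "binomial_poly k = smult (1 / fact k) (\<Prod>i<k. [:real i + 1, 1:])"

lemma poly_binomial_poly: "poly (binomial_poly k) (real n) = real ((n + k) choose k)"
proof -
  have "poly (binomial_poly k) (real n) = pochhammer (real n + 1) k / fact k"
    by (simp add: binomial_poly_def poly_prod pochhammer_prod atLeast0LessThan algebra_simps)
  also have "\<dots> = real ((n + k) choose k)"
    by (simp add: binomial_gbinomial gbinomial_pochhammer')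
  finally show ?thesis .
qed

lemma card_deg_monoms_poly:
  "real (card (deg_monoms d :: ('n::finite \<Rightarrow>\<^sub>0 nat) set)) = poly (binomial_poly (card (UNIV :: 'n set) - 1)) (real d)"
proof -
  have "card (UNIV :: 'n set) \<ge> 1"
    by (simp add: Suc_leI finite_UNIV_card_ge_0)
  then have "(d + card (UNIV :: 'n set) - 1) choose d = (d + (card (UNIV :: 'n set) - 1)) choose (card (UNIV :: 'n set) - 1)"
    using binomial_symmetric[of d "d + (card (UNIV :: 'n set) - 1)"] by simp
  then show ?thesis
    by (simp add: card_deg_monoms poly_binomial_poly)
qed

section \<open>Ideals, homogeneous components and fibre-balanced polynomials\<close>

definition is_ideal :: "('n::finite, 'k::field) mpoly set \<Rightarrow> bool" where
  "is_ideal J \<longleftrightarrow> 0 \<in> J \<and> (\<forall>a\<in>J. \<forall>b\<in>J. a + b \<in> J) \<and> (\<forall>a\<in>J. \<forall>r. r * a \<in> J)"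

lemma ideal_gen_least: "is_ideal J \<Longrightarrow> G \<subseteq> J \<Longrightarrow> ideal_gen G \<subseteq> J"
  unfolding ideal_gen_def is_ideal_def by blast

lemma is_ideal_ideal_gen: "is_ideal (ideal_gen G)"
  unfolding ideal_gen_def is_ideal_def by blast

lemma ideal_gen_base: "G \<subseteq> ideal_gen G"
  unfolding ideal_gen_def by blast

lemma ideal_gen_mult: "a \<in> G \<Longrightarrow> r * a \<in> ideal_gen G"
  using is_ideal_ideal_gen ideal_gen_base unfolding is_ideal_def by blast

lemma poly_mapping_sum_single: "(\<Sum>v\<in>keys p. single v (lookup p v)) = p"
proof (rule poly_mapping_eqI)
  fix k
  show "lookup (\<Sum>v\<in>keys p. single v (lookup p v)) k = lookup p k"
    by (cases "k \<in> keys p") (auto simp: lookup_sum lookup_single when_def in_keys_iff)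
qed

lemma lookup_tmon: "lookup (tmon m :: ('n::finite, 'k::field) mpoly) k = (if m = k then 1 else 0)"
  by (simp add: tmon_def lookup_single when_def)

lemma kscale_eq_mult: "kscale c p = single 0 c * p"
  unfolding kscale_def using mult_map_scale_conv_mult[of c p] by simp

lemma lookup_kscale: "lookup (kscale c p) k = c * lookup p k"
  unfolding kscale_def by transfer (simp add: when_def)

interpretation K: vector_space "kscale :: 'k::field \<Rightarrow> ('n::finite, 'k) mpoly \<Rightarrow> _"
  by unfold_locales (auto simp: kscale_eq_mult algebra_simps single_add mult_single)

lemma single_eq_kscale_tmon: "single v c = kscale c (tmon v)"
  by (simp add: kscale_eq_mult tmon_def mult_single)

lemma independent_unitriangular:
  fixes f :: "'a \<Rightarrow> ('n::finite, 'k::field) mpoly"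
  assumes one: "\<And>a. a \<in> A \<Longrightarrow> lookup (f a) (k a) = 1"
    and zero: "\<And>a b. a \<in> A \<Longrightarrow> b \<in> A \<Longrightarrow> a \<noteq> b \<Longrightarrow> lookup (f b) (k a) = 0"
  shows "inj_on f A" and "K.independent (f ` A)"
proof -
  show "inj_on f A"
    by (rule inj_onI) (metis one zero zero_neq_one)
  show "K.independent (f ` A)"
    unfolding K.independent_explicit_module
  proof (intro allI impI)
    fix t u v
    assume t: "finite t" "t \<subseteq> f ` A" and s: "(\<Sum>v\<in>t. kscale (u v) v) = 0" and v: "v \<in> t"
    obtain a where a: "a \<in> A" "v = f a"
      using t v by blast
    have "0 = (\<Sum>w\<in>t. u w * lookup w (k a))"
      using arg_cong[OF s, of "\<lambda>p. lookup p (k a)"] by (simp add: lookup_sum lookup_kscale)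
    also have "\<dots> = u v * lookup v (k a)"
    proof (rule sum.remove[OF t(1) v, THEN trans], simp, rule sum.neutral, intro ballI)
      fix w assume "w \<in> t - {v}"
      then obtain b where "b \<in> A" "w = f b" "b \<noteq> a"
        using t a by auto
      then show "u w * lookup w (k a) = 0"
        using zero[OF a(1)] by simp
    qed
    also have "\<dots> = u v"
      using one a by simp
    finally show "u v = 0"
      by simp
  qed
qed

lemma dim_homog_part:
  "K.dim (homog_part d :: ('n::finite, 'k::field) mpoly set) = card (deg_monoms d :: ('n \<Rightarrow>\<^sub>0 nat) set)"
proof -
  let ?B = "(tmon :: _ \<Rightarrow> ('n, 'k) mpoly) ` deg_monoms d"
  have indep: "inj_on (tmon :: _ \<Rightarrow> ('n, 'k) mpoly) (deg_monoms d)" "K.independent ?B"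
    by (rule independent_unitriangular[where k = id]; simp add: lookup_tmon)+
  have "?B \<subseteq> homog_part d"
    by (auto simp: homog_part_def tmon_def deg_monoms_def)
  moreover have "homog_part d \<subseteq> K.span ?B"
  proof
    fix p :: "('n, 'k) mpoly" assume p: "p \<in> homog_part d"
    have "p = (\<Sum>v\<in>keys p. kscale (lookup p v) (tmon v))"
      by (simp add: poly_mapping_sum_single single_eq_kscale_tmon[symmetric])
    also have "\<dots> \<in> K.span ?B"
      using p by (intro K.span_sum K.span_scale K.span_base) (auto simp: homog_part_def deg_monoms_def)
    finally show "p \<in> K.span ?B" .
  qed
  ultimately have "card ?B = K.dim (homog_part d :: ('n, 'k) mpoly set)"
    using K.basis_card_eq_dim indep(2) by blast
  then show ?thesis
    using card_image[OF indep(1)] by simp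
qed

definition fibre_sum :: "(('n \<Rightarrow>\<^sub>0 nat) \<Rightarrow> 'c) \<Rightarrow> ('n::finite, 'k::field) mpoly \<Rightarrow> 'c \<Rightarrow> 'k" where
  "fibre_sum f p c = (\<Sum>m | m \<in> keys p \<and> f m = c. lookup p m)"

definition fibre_balanced :: "(('n \<Rightarrow>\<^sub>0 nat) \<Rightarrow> 'c) \<Rightarrow> ('n::finite, 'k::field) mpoly set" where
  "fibre_balanced f = {p. \<forall>c. fibre_sum f p c = 0}"

lemma fibre_sum_superset:
  assumes "finite S" "keys p \<subseteq> S"
  shows "fibre_sum f p c = (\<Sum>m\<in>S. if f m = c then lookup p m else 0)"
proof -
  have "fibre_sum f p c = (\<Sum>m\<in>{m \<in> S. f m = c}. lookup p m)"
    unfolding fibre_sum_def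
    by (rule sum.mono_neutral_left) (use assms in \<open>auto simp: in_keys_iff\<close>)
  also have "\<dots> = (\<Sum>m\<in>S. if f m = c then lookup p m else 0)"
    using assms(1) by (simp add: sum.inter_filter)
  finally show ?thesis .
qed

lemma fibre_sum_add: "fibre_sum f (p + q) c = fibre_sum f p c + fibre_sum f q c"
proof -
  define S where "S = keys p \<union> keys q \<union> keys (p + q)"
  have S: "finite S" "keys p \<subseteq> S" "keys q \<subseteq> S" "keys (p + q) \<subseteq> S"
    by (auto simp: S_def)
  show ?thesis
    by (simp add: fibre_sum_superset[OF S(1)] S(2-4) sum.distrib[symmetric] lookup_add
        if_distrib[of "\<lambda>x. x + _"] cong: if_cong)
qed

lemma fibre_sum_diff: "fibre_sum f (p - q) c = fibre_sum f p c - fibre_sum f q c"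
  using fibre_sum_add[of f "p - q" q c] by simp

lemma fibre_sum_zero [simp]: "fibre_sum f 0 c = 0"
  by (simp add: fibre_sum_def)

lemma fibre_sum_sum: "fibre_sum f (sum g A) c = (\<Sum>x\<in>A. fibre_sum f (g x) c)"
  by (induction A rule: infinite_finite_induct) (auto simp: fibre_sum_add)

lemma fibre_sum_single: "fibre_sum f (single w a) c = (if f w = c then a else 0)"
proof (cases "a = 0")
  case False
  then have "{m. m \<in> keys (single w a) \<and> f m = c} = (if f w = c then {w} else {})"
    by auto
  then show ?thesis
    using False by (simp add: fibre_sum_def)
qed (simp add: fibre_sum_def)

lemma is_ideal_fibre_balanced:
  assumes transl: "\<And>u a b. f (u + a) = f (u + b) \<longleftrightarrow> f a = f b"
  shows "is_ideal (fibre_balanced f :: ('n::finite, 'k::field) mpoly set)"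
proof -
  have single_mult: "single u a * p \<in> fibre_balanced f" if p: "p \<in> fibre_balanced f"
    for u a and p :: "('n, 'k) mpoly"
  proof -
    have "fibre_sum f (single u a * p) c = 0" for c
    proof -
      have "single u a * p = (\<Sum>v\<in>keys p. single (u + v) (a * lookup p v))"
        by (subst (1) poly_mapping_sum_single[of p, symmetric]) (simp add: sum_distrib_left mult_single)
      then have e: "fibre_sum f (single u a * p) c = (\<Sum>v\<in>keys p. if f (u + v) = c then a * lookup p v else 0)"
        by (simp add: fibre_sum_sum fibre_sum_single)
      show ?thesis
      proof (cases "\<exists>v0. f (u + v0) = c")
        case True
        then obtain v0 where v0: "f (u + v0) = c" by blast
        have "fibre_sum f (single u a * p) c = (\<Sum>v\<in>keys p. if f v = f v0 then a * lookup p v else 0)"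
          using e by (simp add: transl flip: v0)
        also have "\<dots> = a * fibre_sum f p (f v0)"
          by (simp add: fibre_sum_superset[of "keys p"] sum_distrib_left if_distrib cong: if_cong)
        finally show ?thesis
          using p by (simp add: fibre_balanced_def)
      next
        case False
        then show ?thesis
          using e by simp
      qed
    qed
    then show ?thesis
      by (simp add: fibre_balanced_def)
  qed
  have "r * p \<in> fibre_balanced f" if "p \<in> fibre_balanced f" for r p :: "('n, 'k) mpoly"
  proof -
    have "r * p = (\<Sum>u\<in>keys r. single u (lookup r u) * p)"
      by (subst (1) poly_mapping_sum_single[of r, symmetric]) (rule sum_distrib_right)
    then show ?thesis
      using single_mult[OF that] by (simp add: fibre_balanced_def fibre_sum_sum)
  qed
  then show ?thesis
    unfolding is_ideal_def by (auto simp: fibre_balanced_def fibre_sum_add)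
qed

lemma fibre_balanced_iff: "p \<in> fibre_balanced f \<longleftrightarrow> (\<forall>v. fibre_sum f p (f v) = 0)"
proof -
  have "fibre_sum f p c = 0" if "c \<notin> range f" for c
    using that by (auto simp: fibre_sum_def intro!: sum.neutral)
  then show ?thesis
    unfolding fibre_balanced_def mem_Collect_eq by (metis rangeE)
qed

lemma fibre_balanced_eq_if_same_kernel:
  fixes f :: "('n::finite \<Rightarrow>\<^sub>0 nat) \<Rightarrow> 'c" and g :: "('n \<Rightarrow>\<^sub>0 nat) \<Rightarrow> 'e"
  assumes "\<And>a b. f a = f b \<longleftrightarrow> g a = g b"
  shows "fibre_balanced f = (fibre_balanced g :: ('n, 'k::field) mpoly set)"
proof -
  have "{m. m \<in> keys p \<and> f m = f v} = {m. m \<in> keys p \<and> g m = g v}" for p :: "('n, 'k) mpoly" and v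
    by (simp only: assms)
  then show ?thesis
    by (simp add: set_eq_iff fibre_balanced_iff fibre_sum_def)
qed

lemma lookup_sum_single_fibre: "lookup (\<Sum>v\<in>keys p. single (h v) (lookup p v)) c = fibre_sum h p c"
  by (simp add: lookup_sum lookup_single when_def fibre_sum_superset[of "keys p"])

section \<open>Lattices and classes of monomials\<close>

lemma card_image_eq_if_same_kernel:
  assumes "\<And>x y. x \<in> A \<Longrightarrow> y \<in> A \<Longrightarrow> f x = f y \<longleftrightarrow> g x = g y"
  shows "card (f ` A) = card (g ` A)"
proof -
  define h where "h z = g (inv_into A f z)" for z
  have h: "h (f x) = g x" if "x \<in> A" for x
  proof -
    have "inv_into A f (f x) \<in> A" "f (inv_into A f (f x)) = f x"
      using that by (auto intro: inv_into_into f_inv_into_f)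
    then show ?thesis
      using assms that by (simp add: h_def)
  qed
  then have "g ` A = h ` f ` A"
    by (auto simp: image_iff)
  moreover have "inj_on h (f ` A)"
    using h assms by (auto simp: inj_on_def)
  ultimately show ?thesis
    by (simp add: card_image)
qed

definition lcoset :: "('n \<Rightarrow> int) set \<Rightarrow> ('n \<Rightarrow> int) \<Rightarrow> ('n \<Rightarrow> int) set" where
  "lcoset L x = {y. y - x \<in> L}"

definition lclass :: "('n \<Rightarrow> int) set \<Rightarrow> ('n \<Rightarrow>\<^sub>0 nat) \<Rightarrow> ('n \<Rightarrow> int) set" where
  "lclass L m = lcoset L (int_exps m)"

lemma torsion_quot_eq: "torsion_quot L = lcoset L ` {x. \<exists>p::int. p > 0 \<and> (\<lambda>i. p * x i) \<in> L}"
  by (simp add: torsion_quot_def lcoset_def fun_diff_def)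

lemma is_lattice_iff: "is_lattice L \<longleftrightarrow> 0 \<in> L \<and> (\<forall>a\<in>L. \<forall>b\<in>L. a + b \<in> L) \<and> (\<forall>a\<in>L. - a \<in> L)"
  by (simp add: is_lattice_def zero_fun_def plus_fun_def fun_Compl_def)

lemma lookup_pos_part: "lookup (pos_part a) i = nat (a i)"
  unfolding pos_part_def by (subst lookup_Abs_poly_mapping) auto

lemma lookup_neg_part: "lookup (neg_part a) i = nat (- a i)"
  unfolding neg_part_def by (subst lookup_Abs_poly_mapping) auto

lemma int_exps_pos_part_minus_neg_part: "int_exps (pos_part a) - int_exps (neg_part a) = a"
  by (simp add: fun_eq_iff int_exps_def lookup_pos_part lookup_neg_part)

definition class_rep :: "('n \<Rightarrow> int) set \<Rightarrow> ('n \<Rightarrow>\<^sub>0 nat) \<Rightarrow> 'n \<Rightarrow>\<^sub>0 nat" where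
  "class_rep L m = (SOME x. lclass L x = lclass L m)"

lemma lclass_class_rep [simp]: "lclass L (class_rep L m) = lclass L m"
  unfolding class_rep_def by (rule someI[of _ m]) (rule refl)

lemma class_rep_eq_iff: "class_rep L m = class_rep L m' \<longleftrightarrow> lclass L m = lclass L m'"
  by (metis class_rep_def lclass_class_rep)

lemma class_rep_idem [simp]: "class_rep L (class_rep L m) = class_rep L m"
  by (simp add: class_rep_eq_iff)

locale int_lattice =
  fixes L :: "('n::finite \<Rightarrow> int) set"
  assumes is_lattice: "is_lattice L"
begin

lemma zero_mem: "0 \<in> L"
  and add_mem: "a \<in> L \<Longrightarrow> b \<in> L \<Longrightarrow> a + b \<in> L"
  and uminus_mem: "a \<in> L \<Longrightarrow> - a \<in> L"
  using is_lattice by (auto simp: is_lattice_iff)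

lemma diff_mem: "a \<in> L \<Longrightarrow> b \<in> L \<Longrightarrow> a - b \<in> L"
  using add_mem[of a "- b"] uminus_mem[of b] by simp

lemma lcoset_eq_iff: "lcoset L a = lcoset L b \<longleftrightarrow> a - b \<in> L"
proof
  assume "lcoset L a = lcoset L b"
  moreover have "a \<in> lcoset L a"
    by (simp add: lcoset_def zero_mem)
  ultimately show "a - b \<in> L"
    by (simp add: lcoset_def)
next
  assume "a - b \<in> L"
  then have "y - a \<in> L \<longleftrightarrow> y - b \<in> L" for y
    using add_mem[of "y - a" "a - b"] diff_mem[of "y - b" "a - b"] by auto
  then show "lcoset L a = lcoset L b"
    by (simp add: lcoset_def)
qed

lemma lcoset_add_eq_iff: "lcoset L (a + c) = lcoset L (b + c) \<longleftrightarrow> lcoset L a = lcoset L b"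
  by (simp add: lcoset_eq_iff)

lemma lclass_eq_iff: "lclass L m = lclass L m' \<longleftrightarrow> int_exps m - int_exps m' \<in> L"
  by (simp add: lclass_def lcoset_eq_iff)

lemma lclass_add_eq_iff: "lclass L (u + a) = lclass L (u + b) \<longleftrightarrow> lclass L a = lclass L b"
  by (simp add: lclass_eq_iff int_exps_add)

lemma lclass_pos_part_eq: "a \<in> L \<Longrightarrow> lclass L (pos_part a) = lclass L (neg_part a)"
  by (simp add: lclass_eq_iff int_exps_pos_part_minus_neg_part)

lemma lattice_ideal_subset_fibre_balanced:
  "lattice_ideal L \<subseteq> (fibre_balanced (lclass L) :: ('n, 'k::field) mpoly set)"
  unfolding lattice_ideal_def
proof (rule ideal_gen_least)
  show "is_ideal (fibre_balanced (lclass L) :: ('n, 'k) mpoly set)"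
    by (rule is_ideal_fibre_balanced) (rule lclass_add_eq_iff)
  show "{tmon (pos_part a) - tmon (neg_part a) |a. a \<in> L} \<subseteq> (fibre_balanced (lclass L) :: ('n, 'k) mpoly set)"
    by (auto simp: fibre_balanced_def fibre_sum_diff tmon_def fibre_sum_single lclass_pos_part_eq)
qed

lemma tmon_diff_mem_lattice_ideal:
  assumes "lclass L m = lclass L m'"
  shows "(tmon m - tmon m' :: ('n, 'k::field) mpoly) \<in> lattice_ideal L"
proof -
  define a where "a = int_exps m - int_exps m'"
  have "a \<in> L"
    using assms by (simp add: a_def lclass_eq_iff)
  define g :: "'n \<Rightarrow>\<^sub>0 nat" where "g = Abs_poly_mapping (\<lambda>i. min (lookup m i) (lookup m' i))"
  have lookup_g: "lookup g i = min (lookup m i) (lookup m' i)" for i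
    unfolding g_def by (subst lookup_Abs_poly_mapping) auto
  have m: "g + pos_part a = m"
    by (rule poly_mapping_eqI) (simp add: lookup_add lookup_g lookup_pos_part a_def int_exps_def)
  have m': "g + neg_part a = m'"
    by (rule poly_mapping_eqI) (simp add: lookup_add lookup_g lookup_neg_part a_def int_exps_def)
  have "(tmon m - tmon m' :: ('n, 'k) mpoly) = tmon g * (tmon (pos_part a) - tmon (neg_part a))"
    by (simp add: right_diff_distrib tmon_def mult_single flip: m m')
  also have "\<dots> \<in> lattice_ideal L"
    unfolding lattice_ideal_def using \<open>a \<in> L\<close> by (intro ideal_gen_mult) blast
  finally show ?thesis .
qed

text \<open>The subtracted sum \<open>\<Sum>\<^sub>v p\<^sub>v t^rep(v)\<close> vanishes: its coefficient at a representative is the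
  coefficient sum of \<open>p\<close> over that class.\<close>

lemma lattice_ideal_binomial_expansion:
  assumes "p \<in> lattice_ideal L"
  shows "p = (\<Sum>v\<in>keys p. kscale (lookup p v) (tmon v - tmon (class_rep L v)))"
proof -
  have "fibre_balanced (class_rep L) = (fibre_balanced (lclass L) :: ('n, 'k::field) mpoly set)"
    by (rule fibre_balanced_eq_if_same_kernel) (rule class_rep_eq_iff)
  then have "p \<in> fibre_balanced (class_rep L)"
    using assms lattice_ideal_subset_fibre_balanced by blast
  then have balanced: "(\<Sum>v\<in>keys p. single (class_rep L v) (lookup p v)) = 0"
    by (intro poly_mapping_eqI) (simp add: lookup_sum_single_fibre fibre_balanced_def)
  have "p = (\<Sum>v\<in>keys p. single v (lookup p v)) - (\<Sum>v\<in>keys p. single (class_rep L v) (lookup p v))"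
    by (simp add: poly_mapping_sum_single balanced)
  also have "\<dots> = (\<Sum>v\<in>keys p. kscale (lookup p v) (tmon v - tmon (class_rep L v)))"
    by (simp add: sum_subtractf[symmetric] single_eq_kscale_tmon K.scale_right_diff_distrib)
  finally show ?thesis .
qed

text \<open>Homogeneous elements of \<open>I(L)\<close> are balanced even on the finer fibres of
  \<open>m \<mapsto> (class of m, deg m)\<close>. If \<open>I(L)\<close> has homogeneous generators, all of it is, which excludes
  the binomials \<open>t^a\<^sup>+ - t^a\<^sup>-\<close> of mixed degree.\<close>

lemma sum_zero_if_graded:
  assumes graded: "graded_ideal (lattice_ideal L :: ('n, 'k::field) mpoly set)" and "a \<in> L"
  shows "sum a UNIV = 0"
proof (rule ccontr)
  assume "sum a UNIV \<noteq> 0"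
  define f where "f m = (lclass L m, mdeg m)" for m
  obtain G where homog: "\<forall>g\<in>G. \<exists>d. g \<in> homog_part d"
    and I: "(lattice_ideal L :: ('n, 'k) mpoly set) = ideal_gen G"
    using graded unfolding graded_ideal_def by blast
  have "G \<subseteq> (fibre_balanced f :: ('n, 'k) mpoly set)"
  proof
    fix g :: "('n, 'k) mpoly" assume "g \<in> G"
    then obtain d where d: "g \<in> homog_part d"
      using homog by blast
    have "g \<in> fibre_balanced (lclass L)"
      using \<open>g \<in> G\<close> ideal_gen_base[of G] I lattice_ideal_subset_fibre_balanced by blast
    moreover have "fibre_sum f g (C, e) = (if e = d then fibre_sum (lclass L) g C else 0)" for C e
    proof -
      have "{m. m \<in> keys g \<and> f m = (C, e)} = (if e = d then {m. m \<in> keys g \<and> lclass L m = C} else {})"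
        using d by (auto simp: f_def homog_part_def)
      then show ?thesis
        by (simp add: fibre_sum_def)
    qed
    ultimately show "g \<in> fibre_balanced f"
      by (simp add: fibre_balanced_def)
  qed
  then have "(lattice_ideal L :: ('n, 'k) mpoly set) \<subseteq> fibre_balanced f"
    unfolding I by (intro ideal_gen_least is_ideal_fibre_balanced) (simp add: f_def lclass_add_eq_iff mdeg_add)
  moreover have "(tmon (pos_part a) - tmon (neg_part a) :: ('n, 'k) mpoly) \<in> lattice_ideal L"
    unfolding lattice_ideal_def using \<open>a \<in> L\<close> by (intro subsetD[OF ideal_gen_base]) blast
  moreover have "int (mdeg (pos_part a)) - int (mdeg (neg_part a))
      = sum (int_exps (pos_part a) - int_exps (neg_part a)) UNIV"
    by (simp add: int_mdeg sum_subtractf fun_diff_def)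
  then have "mdeg (pos_part a) \<noteq> mdeg (neg_part a)"
    using \<open>sum a UNIV \<noteq> 0\<close> by (auto simp: int_exps_pos_part_minus_neg_part)
  then have "fibre_sum f (tmon (pos_part a) - tmon (neg_part a) :: ('n, 'k) mpoly) (f (pos_part a)) = 1"
    by (simp add: fibre_sum_diff tmon_def fibre_sum_single f_def)
  ultimately show False
    unfolding fibre_balanced_def by (metis (mono_tags) mem_Collect_eq subsetD zero_neq_one)
qed

end

section \<open>The Hilbert function of a homogeneous lattice ideal\<close>

locale homogeneous_lattice = int_lattice L for L :: "('n::finite \<Rightarrow> int) set" +
  assumes sum_zero: "a \<in> L \<Longrightarrow> sum a UNIV = 0"
begin

lemma mdeg_eq_if_lclass_eq:
  assumes "lclass L m = lclass L m'"
  shows "mdeg m = mdeg m'"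
proof -
  have "int (mdeg m) - int (mdeg m') = sum (int_exps m - int_exps m') UNIV"
    by (simp add: int_mdeg sum_subtractf fun_diff_def)
  also have "\<dots> = 0"
    using assms by (simp only: lclass_eq_iff sum_zero)
  finally show ?thesis
    by simp
qed

lemma class_rep_mem_deg_monoms: "m \<in> deg_monoms d \<Longrightarrow> class_rep L m \<in> deg_monoms d"
  using mdeg_eq_if_lclass_eq[OF lclass_class_rep] by (simp add: deg_monoms_def)

lemma tmon_diff_class_rep_mem:
  assumes "m \<in> deg_monoms d"
  shows "(tmon m - tmon (class_rep L m) :: ('n, 'k::field) mpoly) \<in> lattice_ideal L \<inter> homog_part d"
proof
  show "(tmon m - tmon (class_rep L m) :: ('n, 'k) mpoly) \<in> lattice_ideal L"
    by (rule tmon_diff_mem_lattice_ideal) simp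
  have "keys (tmon m - tmon (class_rep L m) :: ('n, 'k) mpoly) \<subseteq> {m, class_rep L m}"
    by (auto simp: in_keys_iff lookup_minus lookup_tmon split: if_splits)
  then show "(tmon m - tmon (class_rep L m) :: ('n, 'k) mpoly) \<in> homog_part d"
    using assms class_rep_mem_deg_monoms[OF assms] by (auto simp: homog_part_def deg_monoms_def)
qed

text \<open>A basis of \<open>I(L)\<^sub>d\<close>: the binomials \<open>t^m - t^rep(m)\<close> for the monomials \<open>m\<close> of degree \<open>d\<close>
  that are not the chosen representative of their class.\<close>

lemma dim_lattice_ideal_homog_part:
  "K.dim (lattice_ideal L \<inter> homog_part d :: ('n, 'k::field) mpoly set)
     = card (deg_monoms d - class_rep L ` deg_monoms d)"
proof -
  let ?A = "deg_monoms d - class_rep L ` deg_monoms d"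
  define b :: "_ \<Rightarrow> ('n, 'k) mpoly" where "b m = tmon m - tmon (class_rep L m)" for m
  have rep_ne: "class_rep L a \<noteq> a" if "a \<in> ?A" for a
    using that by (metis DiffE image_eqI)
  have rep_notin: "class_rep L x \<notin> ?A" for x
    by (metis DiffE class_rep_idem class_rep_mem_deg_monoms image_eqI)
  have diag: "lookup (b a) (id a) = 1" if "a \<in> ?A" for a
    using rep_ne[OF that] by (simp add: b_def lookup_minus lookup_tmon)
  have off_diag: "lookup (b c) (id a) = 0" if "a \<in> ?A" "c \<in> ?A" "a \<noteq> c" for a c
    using that rep_notin[of c] by (auto simp: b_def lookup_minus lookup_tmon)
  note indep = independent_unitriangular[of ?A b id, OF diag off_diag]
  have "b ` ?A \<subseteq> lattice_ideal L \<inter> homog_part d"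
    using tmon_diff_class_rep_mem by (auto simp: b_def)
  moreover have "lattice_ideal L \<inter> homog_part d \<subseteq> K.span (b ` ?A)"
  proof
    fix p :: "('n, 'k) mpoly" assume p: "p \<in> lattice_ideal L \<inter> homog_part d"
    have "b v \<in> K.span (b ` ?A)" if "v \<in> keys p" for v
    proof (cases "class_rep L v = v")
      case True
      then show ?thesis
        by (simp add: b_def K.span_zero)
    next
      case False
      then have "v \<notin> class_rep L ` deg_monoms d"
        by (metis class_rep_idem imageE)
      then show ?thesis
        using that p by (intro K.span_base) (auto simp: homog_part_def deg_monoms_def)
    qed
    then have "(\<Sum>v\<in>keys p. kscale (lookup p v) (b v)) \<in> K.span (b ` ?A)"
      by (intro K.span_sum K.span_scale)
    then show "p \<in> K.span (b ` ?A)"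
      using lattice_ideal_binomial_expansion[of p] p by (simp add: b_def)
  qed
  ultimately have "card (b ` ?A) = K.dim (lattice_ideal L \<inter> homog_part d :: ('n, 'k) mpoly set)"
    using K.basis_card_eq_dim indep(2) by blast
  then show ?thesis
    using card_image[OF indep(1)] by simp
qed

lemma hilbert_fun_lattice_ideal:
  "hilbert_fun (lattice_ideal L :: ('n, 'k::field) mpoly set) d = card (lclass L ` deg_monoms d)"
proof -
  have sub: "class_rep L ` deg_monoms d \<subseteq> deg_monoms d"
    using class_rep_mem_deg_monoms by blast
  have "hilbert_fun (lattice_ideal L :: ('n, 'k) mpoly set) d
      = card (deg_monoms d :: ('n \<Rightarrow>\<^sub>0 nat) set) - card (deg_monoms d - class_rep L ` deg_monoms d)"
    by (simp add: hilbert_fun_def kdim_def dim_homog_part dim_lattice_ideal_homog_part)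
  also have "\<dots> = card (class_rep L ` deg_monoms d)"
    using card_Diff_subset[OF finite_subset[OF sub finite_deg_monoms] sub] card_mono[OF finite_deg_monoms sub]
    by simp
  also have "\<dots> = card (lclass L ` deg_monoms d)"
    by (rule card_image_eq_if_same_kernel) (simp add: class_rep_eq_iff)
  finally show ?thesis .
qed

end

section \<open>Existence of the Hilbert polynomial\<close>

definition lex_less :: "('n::finite \<Rightarrow>\<^sub>0 nat) \<Rightarrow> ('n \<Rightarrow>\<^sub>0 nat) \<Rightarrow> bool" where
  "lex_less x y \<longleftrightarrow>
     (\<exists>i. lookup x i < lookup y i \<and> (\<forall>j. to_nat j < to_nat i \<longrightarrow> lookup x j = lookup y j))"

lemma lex_less_irrefl: "\<not> lex_less x x"
  by (simp add: lex_less_def)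

lemma lex_less_trans: "lex_less x y \<Longrightarrow> lex_less y z \<Longrightarrow> lex_less x z"
proof -
  assume "lex_less x y" "lex_less y z"
  then obtain i i' where i: "lookup x i < lookup y i" "\<forall>j. to_nat j < to_nat i \<longrightarrow> lookup x j = lookup y j"
    and i': "lookup y i' < lookup z i'" "\<forall>j. to_nat j < to_nat i' \<longrightarrow> lookup y j = lookup z j"
    unfolding lex_less_def by blast
  consider "to_nat i < to_nat i'" | "to_nat i' < to_nat i" | "i = i'"
    by (metis linorder_neqE_nat to_nat_split)
  then show "lex_less x z"
  proof cases
    case 1
    then show ?thesis
      unfolding lex_less_def using i i' by (intro exI[of _ i]) (metis order.strict_trans)
  next
    case 2
    then show ?thesis
      unfolding lex_less_def using i i' by (intro exI[of _ i']) (metis order.strict_trans)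
  next
    case 3
    then show ?thesis
      unfolding lex_less_def using i i' by (intro exI[of _ i]) auto
  qed
qed

lemma lex_less_linear: "x \<noteq> y \<Longrightarrow> lex_less x y \<or> lex_less y x"
proof -
  assume "x \<noteq> y"
  then obtain k where "lookup x k \<noteq> lookup y k"
    by (meson poly_mapping_eqI)
  then obtain i where i: "lookup x i \<noteq> lookup y i"
    and least: "\<And>j. lookup x j \<noteq> lookup y j \<Longrightarrow> to_nat i \<le> to_nat j"
    using ex_has_least_nat[of "\<lambda>i. lookup x i \<noteq> lookup y i" k to_nat] by blast
  then have "\<forall>j. to_nat j < to_nat i \<longrightarrow> lookup x j = lookup y j"
    by (meson not_le)
  then show ?thesis
    using i unfolding lex_less_def by (metis linorder_neqE_nat)
qed

lemma lex_less_add: "lex_less (x + u) (y + u) \<longleftrightarrow> lex_less x y"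
  by (simp add: lex_less_def lookup_add)

lemma lex_minimal_exists:
  assumes "finite A" "A \<noteq> {}"
  shows "\<exists>x\<in>A. \<forall>y\<in>A. \<not> lex_less y x"
  using assms
proof (induction A rule: finite_ne_induct)
  case (singleton x)
  then show ?case
    by (simp add: lex_less_irrefl)
next
  case (insert x F)
  then obtain z where z: "z \<in> F" "\<forall>y\<in>F. \<not> lex_less y z"
    by blast
  then show ?case
    using lex_less_trans lex_less_irrefl by (cases "lex_less x z") blast+
qed

definition le_pm :: "('n \<Rightarrow>\<^sub>0 nat) \<Rightarrow> ('n \<Rightarrow>\<^sub>0 nat) \<Rightarrow> bool" where
  "le_pm g m \<longleftrightarrow> (\<forall>i. lookup g i \<le> lookup m i)"

lemma le_pm_trans: "le_pm a b \<Longrightarrow> le_pm b c \<Longrightarrow> le_pm a c"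
  by (auto simp: le_pm_def intro: order_trans)

lemma le_pm_add_diff: "le_pm g m \<Longrightarrow> g + (m - g) = m"
  by (rule poly_mapping_eqI) (simp add: lookup_add lookup_minus le_pm_def)

lemma mdeg_less_if_le_pm:
  assumes "le_pm a b" "a \<noteq> b"
  shows "mdeg a < mdeg b"
proof -
  obtain k where "lookup a k \<noteq> lookup b k"
    using assms(2) by (meson poly_mapping_eqI)
  then have "lookup a k < lookup b k"
    using assms(1) by (simp add: le_pm_def le_neq_implies_less)
  then show ?thesis
    unfolding mdeg_def using assms(1) by (intro sum_strict_mono_ex1) (auto simp: le_pm_def)
qed

lemma incseq_subseq_nat: "\<exists>\<phi>. strict_mono \<phi> \<and> incseq (\<lambda>n. (f::nat \<Rightarrow> nat) (\<phi> n))"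
proof -
  obtain \<phi> where \<phi>: "strict_mono \<phi>" "monoseq (\<lambda>n. f (\<phi> n))"
    using seq_monosub by blast
  show ?thesis
  proof (cases "incseq (\<lambda>n. f (\<phi> n))")
    case True
    then show ?thesis
      using \<phi> by blast
  next
    case False
    then have dec: "decseq (\<lambda>n. f (\<phi> n))"
      using \<phi>(2) by (simp add: monoseq_iff)
    obtain N where N: "\<forall>y. f (\<phi> N) \<le> f (\<phi> y)"
      using ex_has_least_nat[of "\<lambda>_. True" 0 "\<lambda>n. f (\<phi> n)"] by blast
    have "f (\<phi> (n + N)) = f (\<phi> N)" for n
      using N dec by (metis decseqD le_add2 order_antisym)
    then have "incseq (\<lambda>n. f (\<phi> (n + N)))"
      by (simp add: incseq_def)
    moreover have "strict_mono (\<lambda>n. \<phi> (n + N))"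
      using \<phi>(1) by (simp add: strict_mono_def)
    ultimately show ?thesis
      by blast
  qed
qed

lemma incseq_subseq_lookups:
  fixes s :: "nat \<Rightarrow> ('n \<Rightarrow>\<^sub>0 nat)"
  assumes "finite J"
  shows "\<exists>\<phi>. strict_mono \<phi> \<and> (\<forall>i\<in>J. incseq (\<lambda>n. lookup (s (\<phi> n)) i))"
  using assms
proof (induction J rule: finite_induct)
  case empty
  have "strict_mono (\<lambda>n::nat. n)"
    by (simp add: strict_mono_def)
  then show ?case
    by blast
next
  case (insert i J)
  then obtain \<phi> where \<phi>: "strict_mono \<phi>" "\<forall>i\<in>J. incseq (\<lambda>n. lookup (s (\<phi> n)) i)"
    by blast
  obtain \<psi> where \<psi>: "strict_mono \<psi>" "incseq (\<lambda>n. lookup (s (\<phi> (\<psi> n))) i)"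
    using incseq_subseq_nat[of "\<lambda>n. lookup (s (\<phi> n)) i"] by blast
  have "strict_mono (\<lambda>n. \<phi> (\<psi> n))"
    using \<phi>(1) \<psi>(1) by (simp add: strict_mono_def)
  moreover have "incseq (\<lambda>n. lookup (s (\<phi> (\<psi> n))) j)" if "j \<in> J" for j
    using \<phi>(2) that strict_mono_mono[OF \<psi>(1)] by (auto simp: incseq_def mono_def)
  ultimately show ?case
    using \<psi>(2) by blast
qed

text \<open>The minimal elements of \<open>U\<close> are finitely many: an infinite sequence of them would have a
  subsequence increasing in every coordinate.\<close>

lemma dickson:
  fixes U :: "('n::finite \<Rightarrow>\<^sub>0 nat) set"
  obtains G where "finite G" "G \<subseteq> U" "\<And>m. m \<in> U \<Longrightarrow> \<exists>g\<in>G. le_pm g m"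
proof
  define G where "G = {g\<in>U. \<forall>m\<in>U. le_pm m g \<longrightarrow> m = g}"
  show "finite G"
  proof (rule ccontr)
    assume "infinite G"
    then obtain f :: "nat \<Rightarrow> _" where f: "inj f" "range f \<subseteq> G"
      using infinite_countable_subset by blast
    obtain \<phi> where \<phi>: "strict_mono \<phi>" "\<forall>i\<in>UNIV. incseq (\<lambda>n. lookup (f (\<phi> n)) i)"
      using incseq_subseq_lookups[of UNIV f] by auto
    have "le_pm (f (\<phi> 0)) (f (\<phi> 1))"
      using \<phi>(2) by (auto simp: le_pm_def incseq_def)
    moreover have "f (\<phi> 0) \<in> U" "f (\<phi> 1) \<in> G"
      using f(2) by (auto simp: G_def)
    ultimately have "\<phi> 0 = \<phi> 1"
      using f(1) by (auto simp: G_def inj_eq)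
    then show False
      using \<phi>(1) by (metis strict_mono_eq zero_neq_one)
  qed
  show "G \<subseteq> U"
    by (auto simp: G_def)
  show "\<exists>g\<in>G. le_pm g m" if "m \<in> U" for m
    using that
  proof (induction "mdeg m" arbitrary: m rule: less_induct)
    case less
    show ?case
    proof (cases "m \<in> G")
      case True
      then show ?thesis
        by (auto simp: le_pm_def)
    next
      case False
      then obtain m' where m': "m' \<in> U" "le_pm m' m" "m' \<noteq> m"
        using less.prems by (auto simp: G_def)
      then obtain g where "g \<in> G" "le_pm g m'"
        using less.hyps mdeg_less_if_le_pm by blast
      then show ?thesis
        using m'(2) le_pm_trans by blast
    qed
  qed
qed

definition sup_pm :: "('n::finite \<Rightarrow>\<^sub>0 nat) set \<Rightarrow> ('n \<Rightarrow>\<^sub>0 nat)" where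
  "sup_pm B = Abs_poly_mapping (\<lambda>i. Max ((\<lambda>g. lookup g i) ` B))"

lemma le_sup_pm_iff:
  assumes "finite B" "B \<noteq> {}"
  shows "le_pm (sup_pm B) m \<longleftrightarrow> (\<forall>g\<in>B. le_pm g m)"
proof -
  have "lookup (sup_pm B) i = Max ((\<lambda>g. lookup g i) ` B)" for i
    unfolding sup_pm_def by (subst lookup_Abs_poly_mapping) auto
  then show ?thesis
    using assms by (auto simp: le_pm_def)
qed

lemma card_deg_monoms_above:
  fixes h :: "'n::finite \<Rightarrow>\<^sub>0 nat"
  assumes "mdeg h \<le> d"
  shows "card (deg_monoms d \<inter> {m. le_pm h m}) = card (deg_monoms (d - mdeg h) :: ('n \<Rightarrow>\<^sub>0 nat) set)"
proof -
  have "bij_betw (\<lambda>m. m + h) (deg_monoms (d - mdeg h)) (deg_monoms d \<inter> {m. le_pm h m})"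
  proof (rule bij_betw_imageI)
    show "inj_on (\<lambda>m. m + h) (deg_monoms (d - mdeg h))"
      by (rule inj_onI) simp
    show "(\<lambda>m. m + h) ` deg_monoms (d - mdeg h) = deg_monoms d \<inter> {m. le_pm h m}"
    proof
      show "(\<lambda>m. m + h) ` deg_monoms (d - mdeg h) \<subseteq> deg_monoms d \<inter> {m. le_pm h m}"
        using assms by (auto simp: deg_monoms_def mdeg_add le_pm_def lookup_add)
      show "deg_monoms d \<inter> {m. le_pm h m} \<subseteq> (\<lambda>m. m + h) ` deg_monoms (d - mdeg h)"
      proof
        fix m assume m: "m \<in> deg_monoms d \<inter> {m. le_pm h m}"
        then have m_eq: "(m - h) + h = m"
          using le_pm_add_diff[of h m] by (simp add: add.commute)
        then have "m - h \<in> deg_monoms (d - mdeg h)"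
          using m mdeg_add[of "m - h" h] by (simp add: deg_monoms_def)
        then show "m \<in> (\<lambda>m. m + h) ` deg_monoms (d - mdeg h)"
          using m_eq by (metis image_eqI)
      qed
    qed
  qed
  from bij_betw_same_card[OF this] show ?thesis
    by simp
qed

text \<open>Inclusion-exclusion over the generators; the monomials of degree \<open>d\<close> above all of \<open>B\<close> are
  the monomials above \<open>sup_pm B\<close>, counted by a shifted binomial coefficient.\<close>

lemma card_deg_monoms_monomial_ideal:
  fixes G :: "('n::finite \<Rightarrow>\<^sub>0 nat) set"
  assumes "finite G" and large: "\<And>B. B \<subseteq> G \<Longrightarrow> B \<noteq> {} \<Longrightarrow> mdeg (sup_pm B) \<le> d"
  shows "real (card (deg_monoms d \<inter> {m. \<exists>g\<in>G. le_pm g m}))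
    = (\<Sum>B | B \<subseteq> G \<and> B \<noteq> {}. (- 1) ^ (card B + 1)
         * poly (binomial_poly (card (UNIV :: 'n set) - 1)) (real d - real (mdeg (sup_pm B))))"
proof -
  define X where "X g = deg_monoms d \<inter> {m. le_pm g m}" for g :: "'n \<Rightarrow>\<^sub>0 nat"
  have "deg_monoms d \<inter> {m. \<exists>g\<in>G. le_pm g m} = \<Union>(X ` G)"
    by (auto simp: X_def)
  moreover have "real (card (\<Union>(X ` G)))
      = (\<Sum>B | B \<subseteq> G \<and> B \<noteq> {}. (- 1) ^ (card B + 1) * real (card (\<Inter>(X ` B))))"
  proof -
    interpret Incl_Excl finite "real o card"
      by unfold_locales (auto simp: card_Un_disjnt)
    have "finite (X g)" for g
      by (simp add: X_def finite_deg_monoms)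
    then show ?thesis
      using restricted_indexed[OF assms(1), of X] by simp
  qed
  moreover have "real (card (\<Inter>(X ` B)))
      = poly (binomial_poly (card (UNIV :: 'n set) - 1)) (real d - real (mdeg (sup_pm B)))"
    if "B \<subseteq> G" "B \<noteq> {}" for B
  proof -
    have "\<Inter>(X ` B) = deg_monoms d \<inter> {m. le_pm (sup_pm B) m}"
      using that assms(1) le_sup_pm_iff[of B] by (auto simp: X_def finite_subset)
    then have "card (\<Inter>(X ` B)) = card (deg_monoms (d - mdeg (sup_pm B)) :: ('n \<Rightarrow>\<^sub>0 nat) set)"
      using card_deg_monoms_above[OF large[OF that]] by simp
    then show ?thesis
      using large[OF that] by (simp add: card_deg_monoms_poly of_nat_diff)
  qed
  ultimately show ?thesis
    by simp
qed

lemma eventually_poly_card_monomial_ideal: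
  fixes G :: "('n::finite \<Rightarrow>\<^sub>0 nat) set"
  assumes "finite G"
  shows "\<exists>P. \<forall>\<^sub>F d in sequentially.
           poly P (real d) = real (card (deg_monoms d - {m. \<exists>g\<in>G. le_pm g m}))"
proof -
  define BS where "BS = {B. B \<subseteq> G \<and> B \<noteq> {}}"
  have "finite BS"
    using assms by (simp add: BS_def)
  define a where "a B = mdeg (sup_pm B)" for B :: "('n \<Rightarrow>\<^sub>0 nat) set"
  define Q where "Q = binomial_poly (card (UNIV :: 'n set) - 1)"
  define P where "P = Q - (\<Sum>B\<in>BS. smult ((- 1) ^ (card B + 1)) (pcompose Q [:- real (a B), 1:]))"
  show ?thesis
  proof (intro exI eventually_sequentiallyI)
    fix d assume d: "(\<Sum>B\<in>BS. a B) \<le> d"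
    have "a B \<le> d" if "B \<in> BS" for B
      using member_le_sum[of B BS a] that \<open>finite BS\<close> d by simp
    then have ideal: "real (card (deg_monoms d \<inter> {m. \<exists>g\<in>G. le_pm g m}))
        = (\<Sum>B\<in>BS. (- 1) ^ (card B + 1) * poly Q (real d - real (a B)))"
      unfolding BS_def Q_def a_def by (rule card_deg_monoms_monomial_ideal[OF assms]) (simp add: BS_def)
    have "card (deg_monoms d - {m. \<exists>g\<in>G. le_pm g m})
        = card (deg_monoms d :: ('n \<Rightarrow>\<^sub>0 nat) set) - card (deg_monoms d \<inter> {m. \<exists>g\<in>G. le_pm g m})"
      by (simp add: card_Diff_subset_Int finite_deg_monoms)
    then have "real (card (deg_monoms d - {m. \<exists>g\<in>G. le_pm g m}))
        = real (card (deg_monoms d :: ('n \<Rightarrow>\<^sub>0 nat) set)) - real (card (deg_monoms d \<inter> {m. \<exists>g\<in>G. le_pm g m}))"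
      by (simp add: of_nat_diff card_mono finite_deg_monoms)
    also have "\<dots> = poly P (real d)"
      by (simp add: ideal P_def Q_def card_deg_monoms_poly poly_sum poly_pcompose)
    finally show "poly P (real d) = real (card (deg_monoms d - {m. \<exists>g\<in>G. le_pm g m}))" ..
  qed
qed

definition nonstandard :: "('n::finite \<Rightarrow> int) set \<Rightarrow> ('n \<Rightarrow>\<^sub>0 nat) set" where
  "nonstandard L = {m. \<exists>m'. lclass L m' = lclass L m \<and> lex_less m' m}"

lemma (in int_lattice) nonstandard_add: "m \<in> nonstandard L \<Longrightarrow> m + u \<in> nonstandard L"
proof -
  assume "m \<in> nonstandard L"
  then obtain m' where "lclass L m' = lclass L m" "lex_less m' m"
    by (auto simp: nonstandard_def)
  then have "lclass L (m' + u) = lclass L (m + u)" "lex_less (m' + u) (m + u)"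
    using lclass_add_eq_iff[of u m' m] by (simp_all add: add.commute lex_less_add)
  then show ?thesis
    by (auto simp: nonstandard_def)
qed

context homogeneous_lattice
begin

lemma card_lclass_image_eq_card_standard:
  "card (lclass L ` deg_monoms d) = card (deg_monoms d - nonstandard L)"
proof -
  let ?R = "deg_monoms d - nonstandard L"
  have "lclass L ` deg_monoms d \<subseteq> lclass L ` ?R"
  proof clarify
    fix m :: "'n \<Rightarrow>\<^sub>0 nat" assume m: "m \<in> deg_monoms d"
    define C where "C = {m' \<in> deg_monoms d. lclass L m' = lclass L m}"
    have "finite C"
      unfolding C_def by (rule finite_subset[OF _ finite_deg_monoms]) auto
    moreover have "C \<noteq> {}"
      using m by (auto simp: C_def)
    ultimately obtain z where z: "z \<in> C" "\<forall>y\<in>C. \<not> lex_less y z"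
      using lex_minimal_exists by blast
    have "z \<notin> nonstandard L"
    proof
      assume "z \<in> nonstandard L"
      then obtain m' where m': "lclass L m' = lclass L z" "lex_less m' z"
        by (auto simp: nonstandard_def)
      then have "m' \<in> C"
        using z(1) mdeg_eq_if_lclass_eq[OF m'(1)] by (auto simp: C_def deg_monoms_def)
      then show False
        using z(2) m'(2) by blast
    qed
    then show "lclass L m \<in> lclass L ` ?R"
      using z(1) by (auto simp: C_def)
  qed
  then have "lclass L ` ?R = lclass L ` deg_monoms d"
    by blast
  moreover have "inj_on (lclass L) ?R"
  proof (rule inj_onI, rule ccontr)
    fix x y assume "x \<in> ?R" "y \<in> ?R" "lclass L x = lclass L y" "x \<noteq> y"
    then show False
      using lex_less_linear[of x y] by (auto simp: nonstandard_def)
  qed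
  ultimately show ?thesis
    using card_image[of "lclass L" ?R] by simp
qed

lemma eventually_poly_card_lclass_image:
  "\<exists>P. \<forall>\<^sub>F d in sequentially. poly P (real d) = real (card (lclass L ` deg_monoms d))"
proof -
  obtain G where G: "finite G" "G \<subseteq> nonstandard L" "\<And>m. m \<in> nonstandard L \<Longrightarrow> \<exists>g\<in>G. le_pm g m"
    using dickson[of "nonstandard L"] by blast
  have "nonstandard L = {m. \<exists>g\<in>G. le_pm g m}"
  proof
    show "{m. \<exists>g\<in>G. le_pm g m} \<subseteq> nonstandard L"
    proof clarify
      fix m g assume "g \<in> G" "le_pm g m"
      then have "g + (m - g) \<in> nonstandard L"
        using G(2) nonstandard_add by blast
      then show "m \<in> nonstandard L"
        using le_pm_add_diff[OF \<open>le_pm g m\<close>] by simp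
    qed
  qed (use G(3) in blast)
  then show ?thesis
    using eventually_poly_card_monomial_ideal[OF G(1)] by (simp add: card_lclass_image_eq_card_standard)
qed

end

section \<open>The torsion subgroup and the degree\<close>

definition zero_sum_vecs :: "('n::finite \<Rightarrow> int) set" where
  "zero_sum_vecs = {x. sum x UNIV = 0}"

context homogeneous_lattice
begin

lemma torsion_subset_zero_sum_vecs: "{x. \<exists>p::int. p > 0 \<and> (\<lambda>i. p * x i) \<in> L} \<subseteq> zero_sum_vecs"
proof clarify
  fix x and p :: int
  assume "p > 0" "(\<lambda>i. p * x i) \<in> L"
  then have "p * sum x UNIV = 0"
    using sum_zero by (simp add: sum_distrib_left)
  then show "x \<in> zero_sum_vecs"
    using \<open>p > 0\<close> by (simp add: zero_sum_vecs_def)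
qed

text \<open>Pigeonhole: two of the classes of \<open>x, 2x, 3x, ...\<close> coincide.\<close>

lemma torsion_if_finite_quotient:
  assumes fin: "finite (lcoset L ` zero_sum_vecs)" and x: "x \<in> zero_sum_vecs"
  shows "\<exists>p::int. p > 0 \<and> (\<lambda>i. p * x i) \<in> L"
proof -
  define f where "f k = lcoset L (\<lambda>i. int k * x i)" for k :: nat
  have "range f \<subseteq> lcoset L ` zero_sum_vecs"
    using x by (auto simp: f_def zero_sum_vecs_def simp flip: sum_distrib_left)
  then have "finite (range f)"
    using fin by (rule finite_subset)
  then have "\<not> inj f"
    using finite_imageD infinite_UNIV_nat by blast
  then obtain k k' where "k \<noteq> k'" "f k = f k'"
    unfolding inj_def by blast
  then obtain k1 k2 where "k1 < k2" "f k2 = f k1"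
    by (metis linorder_neqE_nat)
  then have "(\<lambda>i. int k2 * x i) - (\<lambda>i. int k1 * x i) \<in> L"
    by (simp only: f_def lcoset_eq_iff)
  then have "(\<lambda>i. (int k2 - int k1) * x i) \<in> L"
    by (simp add: fun_diff_def left_diff_distrib)
  then show ?thesis
    using \<open>k1 < k2\<close> by (intro exI[of _ "int k2 - int k1"]) simp
qed

lemma torsion_quot_eq_if_finite:
  "finite (lcoset L ` zero_sum_vecs) \<Longrightarrow> torsion_quot L = lcoset L ` zero_sum_vecs"
  unfolding torsion_quot_eq using torsion_subset_zero_sum_vecs torsion_if_finite_quotient by blast

text \<open>Subtracting \<open>d\<close> from one coordinate maps the classes of degree \<open>d\<close> into \<open>H/L\<close>,
  where \<open>H\<close> is the hyperplane of zero-sum vectors.\<close>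

lemma card_lclass_image_le:
  assumes "finite (lcoset L ` zero_sum_vecs)"
  shows "card (lclass L ` deg_monoms d) \<le> card (lcoset L ` zero_sum_vecs)"
proof -
  fix i0 :: 'n
  define e :: "'n \<Rightarrow> int" where "e i = (if i = i0 then int d else 0)" for i
  have "card (lclass L ` deg_monoms d) = card ((\<lambda>m. lcoset L (int_exps m - e)) ` deg_monoms d)"
    by (rule card_image_eq_if_same_kernel) (simp add: lclass_def lcoset_eq_iff)
  also have "\<dots> = card (lcoset L ` (\<lambda>m. int_exps m - e) ` deg_monoms d)"
    by (simp add: image_image)
  also have "\<dots> \<le> card (lcoset L ` zero_sum_vecs)"
  proof (rule card_mono[OF assms], intro image_mono subsetI)
    fix x assume "x \<in> (\<lambda>m. int_exps m - e) ` deg_monoms d"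
    then obtain m where "m \<in> deg_monoms d" "x = int_exps m - e"
      by blast
    then show "x \<in> zero_sum_vecs"
      using int_mdeg[of m] by (simp add: zero_sum_vecs_def deg_monoms_def e_def sum_subtractf fun_diff_def)
  qed
  finally show ?thesis .
qed

text \<open>Conversely, for large \<open>d\<close> a fixed finite set of classes of \<open>H/L\<close> is met by monomials of
  degree \<open>d\<close>: translate the representatives into the positive orthant and give the excess
  degree to one variable.\<close>

lemma eventually_card_le_card_lclass_image:
  assumes "finite F" "F \<subseteq> zero_sum_vecs"
  shows "\<forall>\<^sub>F d in sequentially. card (lcoset L ` F) \<le> card (lclass L ` deg_monoms d)"
proof -
  fix i0 :: 'n
  define B :: int where "B = (\<Sum>h\<in>F. \<Sum>i\<in>UNIV. \<bar>h i\<bar>)"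
  have bound: "\<bar>h i\<bar> \<le> B" if "h \<in> F" for h i
  proof -
    have "\<bar>h i\<bar> \<le> (\<Sum>i\<in>UNIV. \<bar>h i\<bar>)"
      by (rule member_le_sum) auto
    also have "\<dots> \<le> B"
      unfolding B_def using that assms(1) by (intro member_le_sum) auto
    finally show ?thesis .
  qed
  have "B \<ge> 0"
    unfolding B_def by (intro sum_nonneg) auto
  define s where "s = int (card (UNIV :: 'n set))"
  show ?thesis
  proof (intro eventually_sequentiallyI)
    fix d assume d: "nat (s * B) \<le> d"
    define c :: "'n \<Rightarrow> int" where "c i = B + (if i = i0 then int d - s * B else 0)" for i
    have "(\<lambda>h. h + c) ` F \<subseteq> int_exps ` deg_monoms d"
    proof clarify
      fix h assume "h \<in> F"
      have "0 \<le> h i + c i" for i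
        using bound[OF \<open>h \<in> F\<close>, of i] d \<open>B \<ge> 0\<close> by (auto simp: c_def)
      moreover have "sum (h + c) UNIV = int d"
        using \<open>h \<in> F\<close> assms(2) by (simp add: zero_sum_vecs_def c_def sum.distrib s_def subset_iff)
      ultimately obtain m where "m \<in> deg_monoms d" "int_exps m = h + c"
        using deg_monomsE[of "h + c" d] by auto
      then show "h + c \<in> int_exps ` deg_monoms d"
        by (metis image_eqI)
    qed
    have "card (lcoset L ` F) = card ((\<lambda>h. lcoset L (h + c)) ` F)"
      by (rule card_image_eq_if_same_kernel) (simp add: lcoset_add_eq_iff)
    also have "\<dots> \<le> card (lcoset L ` int_exps ` deg_monoms d)"
      unfolding image_image[symmetric, of "lcoset L" "\<lambda>h. h + c"]
      using \<open>(\<lambda>h. h + c) ` F \<subseteq> _\<close> by (intro card_mono finite_imageI finite_deg_monoms image_mono)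
    also have "\<dots> = card (lclass L ` deg_monoms d)"
      by (simp add: lclass_def image_image)
    finally show "card (lcoset L ` F) \<le> card (lclass L ` deg_monoms d)" .
  qed
qed

lemma card_torsion_quot_if_eventually_const:
  assumes const: "\<forall>\<^sub>F d in sequentially. card (lclass L ` deg_monoms d) = n"
  shows "card (torsion_quot L) = n"
proof -
  have fin: "finite (lcoset L ` zero_sum_vecs)"
  proof (rule ccontr)
    assume "infinite (lcoset L ` zero_sum_vecs)"
    then obtain C where "finite C" "card C = n + 1" "C \<subseteq> lcoset L ` zero_sum_vecs"
      using infinite_arbitrarily_large[of "lcoset L ` zero_sum_vecs" "n + 1"] by meson
    then obtain F where F: "F \<subseteq> zero_sum_vecs" "finite F" "C = lcoset L ` F"
      using finite_subset_image[of C "lcoset L" zero_sum_vecs] by meson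
    have "\<forall>\<^sub>F d in sequentially. n + 1 \<le> card (lclass L ` deg_monoms d)"
      using eventually_card_le_card_lclass_image[OF F(2,1)] by (simp only: F(3)[symmetric] \<open>card C = n + 1\<close>)
    with const have "\<forall>\<^sub>F d in sequentially. False"
      by eventually_elim simp
    then show False
      by simp
  qed
  then obtain F where F: "F \<subseteq> zero_sum_vecs" "finite F" "lcoset L ` zero_sum_vecs = lcoset L ` F"
    using finite_subset_image[OF fin subset_refl] by meson
  have "\<forall>\<^sub>F d in sequentially. card (lcoset L ` zero_sum_vecs) \<le> card (lclass L ` deg_monoms d)"
    using eventually_card_le_card_lclass_image[OF F(2,1)] by (simp only: F(3)[symmetric])
  with const have "\<forall>\<^sub>F d in sequentially. card (lcoset L ` zero_sum_vecs) = n"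
    by eventually_elim (metis card_lclass_image_le[OF fin] le_antisym)
  then have "card (lcoset L ` zero_sum_vecs) = n"
    by (simp add: eventually_const_iff)
  then show ?thesis
    using torsion_quot_eq_if_finite[OF fin] by simp
qed

end

lemma poly_eq_if_eventually_eq:
  fixes p q :: "real poly"
  assumes "\<forall>\<^sub>F d in sequentially. poly p (real d) = poly q (real d)"
  shows "p = q"
proof (rule ccontr)
  assume "p \<noteq> q"
  obtain N where N: "\<And>d. d \<ge> N \<Longrightarrow> poly (p - q) (real d) = 0"
    using assms unfolding eventually_sequentially by auto
  have "real ` {N..} \<subseteq> {x. poly (p - q) x = 0}"
    using N by auto
  moreover have "infinite (real ` {N..})"
    using infinite_Ici[of N] by (auto dest: finite_imageD simp: inj_on_def)
  ultimately show False
    using poly_roots_finite[of "p - q"] \<open>p \<noteq> q\<close> finite_subset by auto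
qed

lemma hilbert_poly_eqI:
  assumes "\<forall>\<^sub>F d in sequentially. poly P (real d) = real (hilbert_fun I d)"
  shows "hilbert_poly I = P"
  unfolding hilbert_poly_def
proof (rule the_equality)
  fix p assume "\<forall>\<^sub>F d in sequentially. poly p (real d) = real (hilbert_fun I d)"
  with assms show "p = P"
    by (intro poly_eq_if_eventually_eq) (auto elim: eventually_elim2)
qed (rule assms)

theorem theorem3p13:
  fixes L :: "('n::finite \<Rightarrow> int) set"
  assumes "card (UNIV :: 'n set) \<ge> 2"
    and "is_lattice L"
    and "graded_ideal (lattice_ideal L :: ('n, 'k::field) mpoly set)"
    and "krull_dim_quot (lattice_ideal L :: ('n, 'k) mpoly set) = 1"
  shows "degree_quot (lattice_ideal L :: ('n, 'k) mpoly set) = real (card (torsion_quot L))"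
proof -
  let ?I = "lattice_ideal L :: ('n, 'k) mpoly set"
  interpret int_lattice L
    by (rule int_lattice.intro) (rule assms(2))
  interpret homogeneous_lattice L
    by unfold_locales (rule sum_zero_if_graded[OF assms(3)])
  obtain P where P: "\<forall>\<^sub>F d in sequentially. poly P (real d) = real (card (lclass L ` deg_monoms d))"
    using eventually_poly_card_lclass_image by blast
  then have "hilbert_poly ?I = P"
    by (intro hilbert_poly_eqI) (simp add: hilbert_fun_lattice_ideal)
  then have "P \<noteq> 0" "degree P = 0" and deg: "degree_quot ?I = coeff P 0"
    using assms(4) by (auto simp: krull_dim_quot_def degree_quot_def split: if_splits)
  have "poly P x = coeff P 0" for x
    using degree_0_id[OF \<open>degree P = 0\<close>] by (metis mult_zero_right add_0_right poly_0 poly_pCons)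
  then have "\<forall>\<^sub>F d in sequentially. real (card (lclass L ` deg_monoms d)) = coeff P 0"
    using P by (simp add: eq_commute)
  then obtain N where N: "\<And>d. d \<ge> N \<Longrightarrow> real (card (lclass L ` deg_monoms d)) = coeff P 0"
    by (auto simp: eventually_sequentially)
  then have "\<forall>\<^sub>F d in sequentially. card (lclass L ` deg_monoms d) = card (lclass L ` deg_monoms N)"
    by (intro eventually_sequentiallyI[of N]) (metis of_nat_eq_iff order_refl)
  then show ?thesis
    using card_torsion_quot_if_eventually_const N[of N] deg by simp
qed

end
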